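(* Let $G$ be a graph in which every vertex belongs to a simplicial clique, and let $S$ be a degree-greedy stable set in $G$. Then every vertex of $S$ is simplicial, and $S$ contains exactly one vertex of each simplicial clique of $G$.
   Context: A vertex $v$ is simplicial if $N[v]$ is a clique; a clique is simplicial if it equals $N[v]$ for a simplicial vertex $v$. For a linear order $\sigma=(v_1,\dots,v_n)$ of $V(G)$, the $\sigma$-greedy stable set is obtained by scanning $v_1,\dots,v_n$ in order, starting with $S=\emptyset$, and adding $v_i$ to $S$ whenever $S\cup\{v_i\}$ is stable. A degree-greedy stable set is a $\sigma$-greedy stable set for some order $\sigma$ with $d_G(v_i)\le d_G(v_j)$ whenever $i<j$ (degrees taken in $G$). *)

theory Defs
  imports Main
begin

definition graph :: "'a set \<Rightarrow> ('a \<Rightarrow> 'a \<Rightarrow> bool) \<Rightarrow> bool" where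
  "graph V E \<longleftrightarrow> finite V \<and> (\<forall>u v. E u v \<longrightarrow> u \<in> V \<and> v \<in> V)
     \<and> (\<forall>u v. E u v \<longrightarrow> E v u) \<and> (\<forall>v. \<not> E v v)"

definition nbhd :: "'a set \<Rightarrow> ('a \<Rightarrow> 'a \<Rightarrow> bool) \<Rightarrow> 'a \<Rightarrow> 'a set" where
  "nbhd V E v = {u \<in> V. E v u}"

definition closed_nbhd :: "'a set \<Rightarrow> ('a \<Rightarrow> 'a \<Rightarrow> bool) \<Rightarrow> 'a \<Rightarrow> 'a set" where
  "closed_nbhd V E v = insert v (nbhd V E v)"

definition degree :: "'a set \<Rightarrow> ('a \<Rightarrow> 'a \<Rightarrow> bool) \<Rightarrow> 'a \<Rightarrow> nat" where
  "degree V E v = card (nbhd V E v)"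

definition clique :: "'a set \<Rightarrow> ('a \<Rightarrow> 'a \<Rightarrow> bool) \<Rightarrow> 'a set \<Rightarrow> bool" where
  "clique V E C \<longleftrightarrow> C \<subseteq> V \<and> (\<forall>u\<in>C. \<forall>w\<in>C. u \<noteq> w \<longrightarrow> E u w)"

definition stable :: "'a set \<Rightarrow> ('a \<Rightarrow> 'a \<Rightarrow> bool) \<Rightarrow> 'a set \<Rightarrow> bool" where
  "stable V E S \<longleftrightarrow> S \<subseteq> V \<and> (\<forall>u\<in>S. \<forall>w\<in>S. \<not> E u w)"

definition simplicial :: "'a set \<Rightarrow> ('a \<Rightarrow> 'a \<Rightarrow> bool) \<Rightarrow> 'a \<Rightarrow> bool" where
  "simplicial V E v \<longleftrightarrow> v \<in> V \<and> clique V E (closed_nbhd V E v)"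

definition simplicial_clique :: "'a set \<Rightarrow> ('a \<Rightarrow> 'a \<Rightarrow> bool) \<Rightarrow> 'a set \<Rightarrow> bool" where
  "simplicial_clique V E C \<longleftrightarrow> (\<exists>v. simplicial V E v \<and> C = closed_nbhd V E v)"

definition greedy_stable :: "'a set \<Rightarrow> ('a \<Rightarrow> 'a \<Rightarrow> bool) \<Rightarrow> 'a list \<Rightarrow> 'a set" where
  "greedy_stable V E \<sigma> =
     foldl (\<lambda>S v. if stable V E (insert v S) then insert v S else S) {} \<sigma>"

definition degree_greedy_stable :: "'a set \<Rightarrow> ('a \<Rightarrow> 'a \<Rightarrow> bool) \<Rightarrow> 'a set \<Rightarrow> bool" where
  "degree_greedy_stable V E S \<longleftrightarrow>
     (\<exists>\<sigma>. distinct \<sigma> \<and> set \<sigma> = V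
        \<and> (\<forall>i j. i < j \<and> j < length \<sigma> \<longrightarrow> degree V E (\<sigma> ! i) \<le> degree V E (\<sigma> ! j))
        \<and> S = greedy_stable V E \<sigma>)"

end

theory Submission
  imports Defs
begin

text \<open>
  The greedy scan dominates: a vertex it rejects has a neighbour that was accepted earlier.
  If \<open>v \<in> S\<close> lay in the simplicial clique \<open>N[w]\<close> without being simplicial itself, then
  \<open>N[w] \<subset> N[v]\<close>, so \<open>w\<close> has smaller degree and is scanned before \<open>v\<close>. Being adjacent to
  \<open>v \<in> S\<close>, \<open>w\<close> was rejected, hence blocked by some earlier \<open>u \<in> S \<inter> N[w]\<close>; as \<open>N[w]\<close> is a
  clique, \<open>u\<close> and \<open>v\<close> are adjacent, contradicting stability. The same domination property puts
  \<open>w\<close> or one of its neighbours into \<open>S\<close>, so \<open>S\<close> meets every simplicial clique, and it meets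
  it at most once because cliques and stable sets share at most one vertex.
\<close>

definition greedy_step :: "'a set \<Rightarrow> ('a \<Rightarrow> 'a \<Rightarrow> bool) \<Rightarrow> 'a set \<Rightarrow> 'a \<Rightarrow> 'a set" where
  "greedy_step V E S v = (if stable V E (insert v S) then insert v S else S)"

lemma greedy_stable_Nil [simp]: "greedy_stable V E [] = {}"
  by (simp add: greedy_stable_def)

lemma greedy_stable_snoc [simp]:
  "greedy_stable V E (xs @ [x]) = greedy_step V E (greedy_stable V E xs) x"
  by (simp add: greedy_stable_def greedy_step_def)

lemma stable_greedy_stable: "stable V E (greedy_stable V E xs)"
  by (induction xs rule: rev_induct) (auto simp: greedy_step_def stable_def)

lemma greedy_stable_subset_set: "greedy_stable V E xs \<subseteq> set xs"
  by (induction xs rule: rev_induct) (auto simp: greedy_step_def)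

lemma greedy_stable_prefix_subset: "greedy_stable V E xs \<subseteq> greedy_stable V E (xs @ ys)"
proof (induction ys rule: rev_induct)
  case (snoc y ys)
  have "greedy_stable V E (xs @ ys) \<subseteq> greedy_stable V E ((xs @ ys) @ [y])"
    by (auto simp: greedy_step_def simp del: append_assoc)
  with snoc show ?case
    by simp
qed simp

lemma not_stable_insert_adjacent:
  assumes "graph V E" "stable V E S" "w \<in> V" "\<not> stable V E (insert w S)"
  shows "\<exists>u\<in>S. E w u"
proof (rule ccontr)
  assume "\<not> (\<exists>u\<in>S. E w u)"
  then have "\<forall>u\<in>S. \<not> E u w \<and> \<not> E w u"
    using assms(1) by (auto simp: graph_def)
  then show False
    using assms by (auto simp: graph_def stable_def)
qed

lemma greedy_stable_dominates:
  assumes "graph V E" "w \<in> V" "w \<notin> greedy_stable V E (xs @ w # ys)"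
  shows "\<exists>u\<in>set xs. u \<in> greedy_stable V E (xs @ w # ys) \<and> E w u"
proof -
  let ?P = "greedy_stable V E xs"
  have prefix: "greedy_stable V E (xs @ [w]) \<subseteq> greedy_stable V E (xs @ w # ys)"
    using greedy_stable_prefix_subset[of V E "xs @ [w]" ys]
    by (simp only: append_assoc append_Cons append_Nil)
  have "\<not> stable V E (insert w ?P)"
  proof
    assume "stable V E (insert w ?P)"
    then have "w \<in> greedy_stable V E (xs @ [w])"
      by (simp add: greedy_step_def)
    with prefix assms(3) show False
      by blast
  qed
  then obtain u where "u \<in> ?P" "E w u"
    using not_stable_insert_adjacent[OF assms(1) stable_greedy_stable assms(2)] by blast
  moreover have "?P \<subseteq> greedy_stable V E (xs @ w # ys)"
    using greedy_stable_prefix_subset[of V E xs "w # ys"] .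
  ultimately show ?thesis
    using greedy_stable_subset_set[of V E xs] by blast
qed

lemma greedy_stable_meets_closed_nbhd:
  assumes "graph V E" "w \<in> V" "w \<in> set \<sigma>"
  shows "greedy_stable V E \<sigma> \<inter> closed_nbhd V E w \<noteq> {}"
proof -
  obtain xs ys where \<sigma>: "\<sigma> = xs @ w # ys"
    using split_list[OF assms(3)] by blast
  show ?thesis
    using greedy_stable_dominates[OF assms(1,2)] assms(1)
    unfolding \<sigma> closed_nbhd_def nbhd_def graph_def by blast
qed

lemma stable_clique_inter_unique:
  assumes "stable V E S" "clique V E C" "x \<in> S \<inter> C" "y \<in> S \<inter> C"
  shows "x = y"
  using assms unfolding stable_def clique_def by blast

lemma card_closed_nbhd:
  assumes "graph V E"
  shows "card (closed_nbhd V E v) = Suc (degree V E v)"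
proof -
  have "finite (nbhd V E v)" "v \<notin> nbhd V E v"
    using assms by (auto simp: graph_def nbhd_def)
  then show ?thesis
    by (simp add: closed_nbhd_def degree_def)
qed

lemma closed_nbhd_subset_of_simplicial:
  assumes "graph V E" "simplicial V E w" "v \<in> closed_nbhd V E w"
  shows "closed_nbhd V E w \<subseteq> closed_nbhd V E v"
  using assms unfolding graph_def simplicial_def clique_def closed_nbhd_def nbhd_def by blast

lemma degree_less_of_simplicial_neighbour:
  assumes "graph V E" "simplicial V E w" "v \<in> closed_nbhd V E w" "\<not> simplicial V E v"
  shows "degree V E w < degree V E v"
proof -
  have v: "v \<in> V"
    using assms(2,3) by (auto simp: simplicial_def clique_def)
  have "closed_nbhd V E w \<noteq> closed_nbhd V E v"
    using assms(2,4) v by (auto simp: simplicial_def)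
  then have "closed_nbhd V E w \<subset> closed_nbhd V E v"
    using closed_nbhd_subset_of_simplicial[OF assms(1-3)] by blast
  moreover have "finite (closed_nbhd V E v)"
    using assms(1) by (auto simp: graph_def closed_nbhd_def nbhd_def)
  ultimately have "card (closed_nbhd V E w) < card (closed_nbhd V E v)"
    by (rule psubset_card_mono[rotated])
  then show ?thesis
    using card_closed_nbhd[OF assms(1)] by simp
qed

lemma degree_sorted_greedy_stable_simplicial:
  assumes "graph V E"
    and covered: "\<forall>v\<in>V. \<exists>C. simplicial_clique V E C \<and> v \<in> C"
    and "V \<subseteq> set \<sigma>"
    and sorted: "sorted_wrt (\<lambda>x y. degree V E x \<le> degree V E y) \<sigma>"
    and vS: "v \<in> greedy_stable V E \<sigma>"
  shows "simplicial V E v"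
proof (rule ccontr)
  assume not_simplicial: "\<not> simplicial V E v"
  let ?S = "greedy_stable V E \<sigma>"
  have S_stable: "stable V E ?S"
    by (rule stable_greedy_stable)
  then have "v \<in> V"
    using vS by (auto simp: stable_def)
  then obtain w where w: "simplicial V E w" and vw: "v \<in> closed_nbhd V E w"
    using covered by (auto simp: simplicial_clique_def)
  have "w \<in> V" and clique: "clique V E (closed_nbhd V E w)"
    using w by (auto simp: simplicial_def)
  have deg_less: "degree V E w < degree V E v"
    using degree_less_of_simplicial_neighbour[OF assms(1) w vw not_simplicial] .
  then have "E w v"
    using vw by (auto simp: closed_nbhd_def nbhd_def)
  then have "w \<notin> ?S"
    using vS S_stable by (auto simp: stable_def)
  obtain xs ys where \<sigma>: "\<sigma> = xs @ w # ys"
    using split_list[of w \<sigma>] \<open>w \<in> V\<close> assms(3) by blast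
  obtain u where u: "u \<in> set xs" "u \<in> ?S" "E w u"
    using greedy_stable_dominates[OF assms(1) \<open>w \<in> V\<close>, of xs ys] \<open>w \<notin> ?S\<close>
    unfolding \<sigma> by blast
  have "degree V E u \<le> degree V E w"
    using sorted u(1) unfolding \<sigma> by (simp add: sorted_wrt_append)
  with deg_less have "u \<noteq> v"
    by auto
  moreover have "u \<in> closed_nbhd V E w"
    using u(3) assms(1) by (auto simp: graph_def closed_nbhd_def nbhd_def)
  ultimately have "E u v"
    using clique vw by (auto simp: clique_def)
  then show False
    using u(2) vS S_stable by (auto simp: stable_def)
qed

theorem lemma9:
  fixes V :: "'a set" and E :: "'a \<Rightarrow> 'a \<Rightarrow> bool" and S :: "'a set"
  assumes "graph V E"
    and "\<forall>v\<in>V. \<exists>C. simplicial_clique V E C \<and> v \<in> C"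
    and "degree_greedy_stable V E S"
  shows "(\<forall>v\<in>S. simplicial V E v)
    \<and> (\<forall>C. simplicial_clique V E C \<longrightarrow> card (S \<inter> C) = 1)"
proof -
  obtain \<sigma> where V: "set \<sigma> = V" and S: "S = greedy_stable V E \<sigma>"
    and sorted: "sorted_wrt (\<lambda>x y. degree V E x \<le> degree V E y) \<sigma>"
    using assms(3) unfolding degree_greedy_stable_def sorted_wrt_iff_nth_less by blast
  have "simplicial V E v" if "v \<in> S" for v
    using degree_sorted_greedy_stable_simplicial[OF assms(1,2) _ sorted] that V S by blast
  moreover have "card (S \<inter> C) = 1" if C: "simplicial_clique V E C" for C
  proof -
    obtain w where w: "simplicial V E w" and C: "C = closed_nbhd V E w"
      using C by (auto simp: simplicial_clique_def)
    then have "w \<in> V" "clique V E C"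
      by (auto simp: simplicial_def)
    then obtain x where "x \<in> S \<inter> C"
      using greedy_stable_meets_closed_nbhd[OF assms(1)] V S C by blast
    then have "S \<inter> C = {x}"
      using stable_clique_inter_unique[OF _ \<open>clique V E C\<close>] stable_greedy_stable S by blast
    then show ?thesis
      by simp
  qed
  ultimately show ?thesis
    by blast
qed

end
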